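(* Let $g$ be any connected undirected graph (system) with diameter $diam(g)$. Every protocol $\pi$ in the state model that is self-stabilizing for the mutual exclusion specification $spec_{EM}$ on $g$ satisfies $temps\_stab(\pi,ds)\ge \lceil diam(g)/2\rceil$, where $ds$ is the synchronous daemon.
   Context: Model (state model with shared variables): a distributed system is a connected undirected graph $g=(V,E)$ whose vertices are processors and edges are communication links; $diam(g)$ is its diameter. Each processor has a unique identity. The state of a processor is the value of its variables; a configuration is the tuple of all processor states. A protocol is a set of rules $\langle guard\rangle \to \langle action\rangle$, where the guard is a predicate on the state of the processor and of its neighbours and the action updates the processor's own state. A processor is enabled if one of its guards is true. In a step, a daemon selects a nonempty subset of the enabled processors, and each selected processor atomically executes its action, all selected processors reading the configuration at the beginning of the step. The synchronous daemon $ds$ selects all enabled processors at every step. Self-stabilization and stabilization time: a protocol $\pi$ is self-stabilizing for $spec$ under daemon $d$ if, from any configuration, every execution of $\pi$ under $d$ contains a configuration from which every execution of $\pi$ under $d$ satisfies $spec$. $temps\_stab(\pi,d)$ is the worst case, over all initial configurations and all executions of $\pi$ under $d$, of the number of steps until such a configuration is reached. Mutual exclusion: each processor $v$ has a predicate $privilege_v$ on its state; $v$ is privileged in a configuration $\gamma$ iff $privilege_v$ is true in $\gamma$; if $v$ is privileged in $\gamma$ and is activated during step $(\gamma,\gamma')$, then $v$ executes its critical section during that step. An execution satisfies $spec_{EM}$ if in every configuration at most one processor is privileged (safety) and every processor executes its critical section infinitely often (liveness). *)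

theory Defs
  imports Complex_Main "HOL-Library.Extended_Nat"
begin

definition undirected_connected :: "('v::finite \<Rightarrow> 'v \<Rightarrow> bool) \<Rightarrow> bool" where
  "undirected_connected E \<longleftrightarrow>
     (\<forall>u v. E u v \<longrightarrow> E v u) \<and> (\<forall>u. \<not> E u u) \<and>
     (\<forall>u v. (u, v) \<in> {(a, b). E a b}\<^sup>*)"

definition gdist :: "('v \<Rightarrow> 'v \<Rightarrow> bool) \<Rightarrow> 'v \<Rightarrow> 'v \<Rightarrow> nat" where
  "gdist E u v = (LEAST n. (u, v) \<in> {(a, b). E a b} ^^ n)"

definition diam :: "('v::finite \<Rightarrow> 'v \<Rightarrow> bool) \<Rightarrow> nat" where
  "diam E = Max {gdist E u v | u v. True}"

type_synonym ('v, 's) config = "'v \<Rightarrow> 's"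

text \<open>A rule is a pair (guard, action); rules v is the (finite) set of rules of
  processor v. Guards and actions may only read the states of v and its neighbours.\<close>
type_synonym ('v, 's) rule = "(('v, 's) config \<Rightarrow> bool) \<times> (('v, 's) config \<Rightarrow> 's)"
type_synonym ('v, 's) protocol = "'v \<Rightarrow> ('v, 's) rule set"

definition is_protocol :: "('v \<Rightarrow> 'v \<Rightarrow> bool) \<Rightarrow> ('v, 's) protocol \<Rightarrow> bool" where
  "is_protocol E \<pi> \<longleftrightarrow>
     (\<forall>v. finite (\<pi> v)) \<and>
     (\<forall>v r \<gamma> \<gamma>'. r \<in> \<pi> v \<longrightarrow> (\<forall>u. u = v \<or> E v u \<longrightarrow> \<gamma> u = \<gamma>' u) \<longrightarrow>
        (fst r \<gamma> = fst r \<gamma>' \<and> snd r \<gamma> = snd r \<gamma>'))"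

definition enabled :: "('v, 's) protocol \<Rightarrow> ('v, 's) config \<Rightarrow> 'v set" where
  "enabled \<pi> \<gamma> = {v. \<exists>r \<in> \<pi> v. fst r \<gamma>}"

definition step :: "('v, 's) protocol \<Rightarrow> ('v, 's) config \<Rightarrow> 'v set \<Rightarrow> ('v, 's) config \<Rightarrow> bool" where
  "step \<pi> \<gamma> S \<gamma>' \<longleftrightarrow>
     (\<forall>v. v \<notin> S \<longrightarrow> \<gamma>' v = \<gamma> v) \<and>
     (\<forall>v \<in> S. \<exists>r \<in> \<pi> v. fst r \<gamma> \<and> \<gamma>' v = snd r \<gamma>)"

text \<open>A daemon is given by the selections it may make: d En S holds if the daemon
  may select S when En is the set of enabled processors.\<close>
type_synonym 'v daemon = "'v set \<Rightarrow> 'v set \<Rightarrow> bool"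

definition ds :: "'v daemon" where
  "ds En S \<longleftrightarrow> S = En"

text \<open>A finite (maximal) execution ending in a terminal configuration is
  represented by repeating the terminal configuration with empty activated sets.\<close>
type_synonym ('v, 's) execution = "(nat \<Rightarrow> ('v, 's) config) \<times> (nat \<Rightarrow> 'v set)"

definition is_exec :: "('v, 's) protocol \<Rightarrow> 'v daemon \<Rightarrow> ('v, 's) execution \<Rightarrow> bool" where
  "is_exec \<pi> d e \<longleftrightarrow>
     (\<forall>i. if enabled \<pi> (fst e i) = {}
          then snd e i = {} \<and> fst e (Suc i) = fst e i
          else snd e i \<noteq> {} \<and> snd e i \<subseteq> enabled \<pi> (fst e i) \<and>
               d (enabled \<pi> (fst e i)) (snd e i) \<and>
               step \<pi> (fst e i) (snd e i) (fst e (Suc i)))"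

text \<open>priv v s: processor v with local state s is privileged.\<close>
definition spec_EM :: "('v \<Rightarrow> 's \<Rightarrow> bool) \<Rightarrow> ('v, 's) execution \<Rightarrow> bool" where
  "spec_EM priv e \<longleftrightarrow>
     (\<forall>i. card {v. priv v (fst e i v)} \<le> 1) \<and>
     (\<forall>v. infinite {i. priv v (fst e i v) \<and> v \<in> snd e i})"

definition legitimate ::
  "('v, 's) protocol \<Rightarrow> 'v daemon \<Rightarrow> (('v, 's) execution \<Rightarrow> bool) \<Rightarrow> ('v, 's) config \<Rightarrow> bool" where
  "legitimate \<pi> d spec \<gamma> \<longleftrightarrow> (\<forall>e. is_exec \<pi> d e \<and> fst e 0 = \<gamma> \<longrightarrow> spec e)"

definition self_stabilizing ::
  "('v, 's) protocol \<Rightarrow> 'v daemon \<Rightarrow> (('v, 's) execution \<Rightarrow> bool) \<Rightarrow> bool" where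
  "self_stabilizing \<pi> d spec \<longleftrightarrow>
     (\<forall>e. is_exec \<pi> d e \<longrightarrow> (\<exists>k. legitimate \<pi> d spec (fst e k)))"

definition stab_steps ::
  "('v, 's) protocol \<Rightarrow> 'v daemon \<Rightarrow> (('v, 's) execution \<Rightarrow> bool) \<Rightarrow> ('v, 's) execution \<Rightarrow> enat" where
  "stab_steps \<pi> d spec e =
     (if \<exists>k. legitimate \<pi> d spec (fst e k)
      then enat (LEAST k. legitimate \<pi> d spec (fst e k)) else \<infinity>)"

definition temps_stab ::
  "('v, 's) protocol \<Rightarrow> 'v daemon \<Rightarrow> (('v, 's) execution \<Rightarrow> bool) \<Rightarrow> enat" where
  "temps_stab \<pi> d spec = (SUP e \<in> {e. is_exec \<pi> d e}. stab_steps \<pi> d spec e)"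

end

theory Submission
  imports Defs
begin

text \<open>In a synchronous execution a processor's state after
  i steps depends only on the initial states within distance i. Take two
  processors u, v at distance diam g and k with 2k < diam g, so that their
  k-balls are disjoint. From a legitimate execution, in which u and v are
  privileged infinitely often, splice together a start configuration whose
  k-ball around u is a snapshot taken k steps before a time where u is
  privileged, and likewise around v. The synchronous run from it has both u
  and v privileged after k steps, so none of its first k+1 configurations is
  legitimate.\<close>

definition hop_ball :: "('v \<Rightarrow> 'v \<Rightarrow> bool) \<Rightarrow> 'v \<Rightarrow> nat \<Rightarrow> 'v set" where
  "hop_ball E u r = {w. \<exists>p\<le>r. (u, w) \<in> {(a, b). E a b} ^^ p}"

lemma center_in_hop_ball: "u \<in> hop_ball E u r"
  unfolding hop_ball_def by force

lemma hop_ball_mono: "r \<le> r' \<Longrightarrow> hop_ball E u r \<subseteq> hop_ball E u r'"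
  unfolding hop_ball_def using order_trans by blast

lemma hop_ball_closed_neighbourhood:
  assumes "w \<in> hop_ball E u r" and "x = w \<or> E w x"
  shows "x \<in> hop_ball E u (Suc r)"
proof -
  obtain p where "p \<le> r" "(u, w) \<in> {(a, b). E a b} ^^ p"
    using assms(1) unfolding hop_ball_def by blast
  then have "(u, x) \<in> {(a, b). E a b} ^^ p \<or> (u, x) \<in> {(a, b). E a b} ^^ Suc p"
    using assms(2) by auto
  moreover have "p \<le> Suc r" "Suc p \<le> Suc r" using \<open>p \<le> r\<close> by simp_all
  ultimately show ?thesis unfolding hop_ball_def by blast
qed

lemma relpow_converse_of_symmetric:
  assumes "\<forall>a b. E a b \<longrightarrow> E b a" and "(x, y) \<in> {(a, b). E a b} ^^ n"
  shows "(y, x) \<in> {(a, b). E a b} ^^ n"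
  using assms(2)
proof (induction n arbitrary: y)
  case (Suc n)
  then obtain z where "(x, z) \<in> {(a, b). E a b} ^^ n" "E z y" by auto
  with Suc.IH assms(1) show ?case by (blast intro: relpow_Suc_I2)
qed simp

lemma gdist_le_via_common_point:
  assumes "\<forall>a b. E a b \<longrightarrow> E b a" "w \<in> hop_ball E u p" "w \<in> hop_ball E v q"
  shows "gdist E u v \<le> p + q"
proof -
  obtain p' q' where "p' \<le> p" "q' \<le> q" "(u, w) \<in> {(a, b). E a b} ^^ p'"
    "(v, w) \<in> {(a, b). E a b} ^^ q'"
    using assms(2,3) unfolding hop_ball_def by auto
  then have "(u, v) \<in> {(a, b). E a b} ^^ (p' + q')"
    using relpow_converse_of_symmetric[OF assms(1)] by (auto simp: relpow_add)
  then have "gdist E u v \<le> p' + q'" unfolding gdist_def by (rule Least_le)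
  with \<open>p' \<le> p\<close> \<open>q' \<le> q\<close> show ?thesis by simp
qed

lemma hop_balls_disjoint:
  assumes "\<forall>a b. E a b \<longrightarrow> E b a" and "2 * k < gdist E u v"
  shows "hop_ball E u k \<inter> hop_ball E v k = {}"
  using gdist_le_via_common_point[OF assms(1)] assms(2) by fastforce

lemma diam_attained:
  fixes E :: "'v::finite \<Rightarrow> 'v \<Rightarrow> bool"
  obtains u v where "gdist E u v = diam E"
proof -
  have "{gdist E u v | u v. True} = (\<lambda>(u, v). gdist E u v) ` UNIV" by auto
  then have "finite {gdist E u v | u v. True}" by simp
  then have "diam E \<in> {gdist E u v | u v. True}"
    unfolding diam_def by (rule Max_in) auto
  then show thesis using that by (auto simp del: diam_def)
qed

lemma nat_ceiling_half: "nat \<lceil>real d / 2\<rceil> = (d + 1) div 2"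
  by linarith

definition moves :: "('v, 's) protocol \<Rightarrow> ('v, 's) config \<Rightarrow> 'v \<Rightarrow> 's set" where
  "moves \<pi> \<gamma> w = (\<lambda>r. snd r \<gamma>) ` {r \<in> \<pi> w. fst r \<gamma>}"

lemma moves_empty_iff: "moves \<pi> \<gamma> w = {} \<longleftrightarrow> w \<notin> enabled \<pi> \<gamma>"
  unfolding moves_def enabled_def by auto

lemma moves_local:
  assumes "is_protocol E \<pi>" and "\<forall>x. x = w \<or> E w x \<longrightarrow> \<gamma> x = \<gamma>' x"
  shows "moves \<pi> \<gamma> w = moves \<pi> \<gamma>' w"
proof -
  have "\<forall>r\<in>\<pi> w. fst r \<gamma> = fst r \<gamma>' \<and> snd r \<gamma> = snd r \<gamma>'"
    using assms unfolding is_protocol_def by blast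
  then show ?thesis unfolding moves_def by (auto simp: image_def) (metis fst_conv snd_conv)+
qed

text \<open>Synchronous successor of processor w that adopts the proposed state s
  whenever s is a legal move, so that a synchronous run can be steered to
  copy the moves of another execution.\<close>

definition guided_next :: "('v, 's) protocol \<Rightarrow> ('v, 's) config \<Rightarrow> 'v \<Rightarrow> 's \<Rightarrow> 's" where
  "guided_next \<pi> \<gamma> w s =
     (if moves \<pi> \<gamma> w = {} then \<gamma> w
      else if s \<in> moves \<pi> \<gamma> w then s else (SOME s'. s' \<in> moves \<pi> \<gamma> w))"

primrec guided_run ::
  "('v, 's) protocol \<Rightarrow> (nat \<Rightarrow> 'v \<Rightarrow> 's) \<Rightarrow> ('v, 's) config \<Rightarrow> nat \<Rightarrow> ('v, 's) config" where
  "guided_run \<pi> pref c 0 = c"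
| "guided_run \<pi> pref c (Suc i) = (\<lambda>w. guided_next \<pi> (guided_run \<pi> pref c i) w (pref i w))"

lemma guided_next_in_moves:
  "moves \<pi> \<gamma> w \<noteq> {} \<Longrightarrow> guided_next \<pi> \<gamma> w s \<in> moves \<pi> \<gamma> w"
  unfolding guided_next_def by (auto intro: someI_ex)

lemma step_guided_next:
  "step \<pi> \<gamma> (enabled \<pi> \<gamma>) (\<lambda>w. guided_next \<pi> \<gamma> w (pref w))"
  unfolding step_def
proof (intro conjI allI impI ballI)
  fix v assume "v \<notin> enabled \<pi> \<gamma>"
  then show "guided_next \<pi> \<gamma> v (pref v) = \<gamma> v"
    by (simp add: guided_next_def moves_empty_iff)
next
  fix v assume "v \<in> enabled \<pi> \<gamma>"
  then have "guided_next \<pi> \<gamma> v (pref v) \<in> moves \<pi> \<gamma> v"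
    by (simp add: guided_next_in_moves moves_empty_iff)
  then show "\<exists>r\<in>\<pi> v. fst r \<gamma> \<and> guided_next \<pi> \<gamma> v (pref v) = snd r \<gamma>"
    unfolding moves_def by auto
qed

lemma guided_run_is_sync_exec:
  "is_exec \<pi> ds (guided_run \<pi> pref c, \<lambda>i. enabled \<pi> (guided_run \<pi> pref c i))"
  unfolding is_exec_def
  using step_guided_next[of \<pi> _ "pref _"]
  by (auto simp: ds_def guided_next_def moves_empty_iff)

lemma sync_exec_next:
  assumes "is_exec \<pi> ds e"
  shows "guided_next \<pi> (fst e t) w (fst e (Suc t) w) = fst e (Suc t) w"
proof (cases "enabled \<pi> (fst e t) = {}")
  case True
  with assms have "fst e (Suc t) = fst e t" unfolding is_exec_def by metis
  with True show ?thesis by (simp add: guided_next_def moves_empty_iff)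
next
  case False
  with assms have "step \<pi> (fst e t) (enabled \<pi> (fst e t)) (fst e (Suc t))"
    unfolding is_exec_def ds_def by metis
  then show ?thesis
  proof (cases "w \<in> enabled \<pi> (fst e t)")
    case True
    with \<open>step _ _ _ _\<close> have "fst e (Suc t) w \<in> moves \<pi> (fst e t) w"
      unfolding step_def moves_def by force
    then show ?thesis by (auto simp: guided_next_def)
  next
    case False
    with \<open>step _ _ _ _\<close> show ?thesis
      unfolding step_def by (simp add: guided_next_def moves_empty_iff)
  qed
qed

lemma suffix_is_exec:
  assumes "is_exec \<pi> d e"
  shows "is_exec \<pi> d (\<lambda>i. fst e (j + i), \<lambda>i. snd e (j + i))"
  using assms unfolding is_exec_def by (metis add_Suc_right fst_conv snd_conv)

lemma guided_run_replays_ball: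
  assumes prot: "is_protocol E \<pi>" and exec: "is_exec \<pi> ds e"
    and start: "\<forall>w\<in>hop_ball E u k. c w = fst e t w"
    and steer: "\<forall>i<k. \<forall>w\<in>hop_ball E u (k - Suc i). pref i w = fst e (t + Suc i) w"
  shows "i \<le> k \<Longrightarrow> \<forall>w\<in>hop_ball E u (k - i). guided_run \<pi> pref c i w = fst e (t + i) w"
proof (induction i)
  case 0
  then show ?case using start by simp
next
  case (Suc i)
  show ?case
  proof
    fix w assume w: "w \<in> hop_ball E u (k - Suc i)"
    have "Suc (k - Suc i) = k - i" using Suc.prems by simp
    then have "\<forall>x. x = w \<or> E w x \<longrightarrow> guided_run \<pi> pref c i x = fst e (t + i) x"
      using Suc hop_ball_closed_neighbourhood[OF w] by auto
    then have "moves \<pi> (guided_run \<pi> pref c i) w = moves \<pi> (fst e (t + i)) w"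
      and "guided_run \<pi> pref c i w = fst e (t + i) w"
      using moves_local[OF prot] by auto
    then have "guided_run \<pi> pref c (Suc i) w
        = guided_next \<pi> (fst e (t + i)) w (fst e (Suc (t + i)) w)"
      using steer w Suc.prems by (simp add: guided_next_def)
    then show "guided_run \<pi> pref c (Suc i) w = fst e (t + Suc i) w"
      using sync_exec_next[OF exec] by simp
  qed
qed

lemma sync_exec_with_two_privileged:
  assumes prot: "is_protocol E \<pi>" and exec: "is_exec \<pi> ds e" and spec: "spec_EM priv e"
    and disj: "hop_ball E u k \<inter> hop_ball E v k = {}"
  obtains f where "is_exec \<pi> ds f" "priv u (fst f k u)" "priv v (fst f k v)"
proof -
  have "\<And>x. infinite {i. priv x (fst e i x) \<and> x \<in> snd e i}"
    using spec unfolding spec_EM_def by blast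
  then obtain a b where a: "a \<ge> k" "priv u (fst e a u)" and b: "b \<ge> k" "priv v (fst e b v)"
    unfolding infinite_nat_iff_unbounded_le by (metis (no_types, lifting) mem_Collect_eq)
  define c where "c = (\<lambda>w. if w \<in> hop_ball E u k then fst e (a - k) w else fst e (b - k) w)"
  define pref where "pref = (\<lambda>i w. if w \<in> hop_ball E u (k - Suc i)
      then fst e (a - k + Suc i) w else fst e (b - k + Suc i) w)"
  have inner_disj: "w \<notin> hop_ball E u (k - Suc i)" if "w \<in> hop_ball E v (k - Suc i)" for w i
  proof
    assume "w \<in> hop_ball E u (k - Suc i)"
    with that have "w \<in> hop_ball E u k \<inter> hop_ball E v k"
      using hop_ball_mono[of "k - Suc i" k E u] hop_ball_mono[of "k - Suc i" k E v] by auto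
    with disj show False by simp
  qed
  have "\<forall>w\<in>hop_ball E u (k - k). guided_run \<pi> pref c k w = fst e (a - k + k) w"
    by (rule guided_run_replays_ball[OF prot exec]) (auto simp: c_def pref_def)
  then have "guided_run \<pi> pref c k u = fst e a u" using a(1) center_in_hop_ball by fastforce
  moreover have "\<forall>w\<in>hop_ball E v (k - k). guided_run \<pi> pref c k w = fst e (b - k + k) w"
    by (rule guided_run_replays_ball[OF prot exec]) (use disj inner_disj in \<open>auto simp: c_def pref_def\<close>)
  then have "guided_run \<pi> pref c k v = fst e b v" using b(1) center_in_hop_ball by fastforce
  ultimately show thesis using that[OF guided_run_is_sync_exec[of \<pi> pref c]] a(2) b(2) by simp
qed

lemma not_legitimate_before_exclusion_fault:
  fixes priv :: "'v::finite \<Rightarrow> 's \<Rightarrow> bool"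
  assumes "is_exec \<pi> d f" "u \<noteq> v" "priv u (fst f k u)" "priv v (fst f k v)" "j \<le> k"
  shows "\<not> legitimate \<pi> d (spec_EM priv) (fst f j)"
proof
  assume "legitimate \<pi> d (spec_EM priv) (fst f j)"
  moreover have "is_exec \<pi> d (\<lambda>i. fst f (j + i), \<lambda>i. snd f (j + i))"
    using assms(1) by (rule suffix_is_exec)
  ultimately have "card {w. priv w (fst f (j + (k - j)) w)} \<le> 1"
    unfolding legitimate_def spec_EM_def by fastforce
  moreover have "{u, v} \<subseteq> {w. priv w (fst f (j + (k - j)) w)}"
    using assms(3-5) by simp
  then have "card {u, v} \<le> card {w. priv w (fst f (j + (k - j)) w)}"
    by (rule card_mono[rotated]) simp
  ultimately show False using \<open>u \<noteq> v\<close> by simp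
qed

lemma stab_steps_lower_bound:
  assumes "\<forall>j\<le>k. \<not> legitimate \<pi> d spec (fst f j)"
  shows "enat (Suc k) \<le> stab_steps \<pi> d spec f"
proof (cases "\<exists>j. legitimate \<pi> d spec (fst f j)")
  case True
  then have "legitimate \<pi> d spec (fst f (LEAST j. legitimate \<pi> d spec (fst f j)))"
    by (rule LeastI_ex)
  with assms have "k < (LEAST j. legitimate \<pi> d spec (fst f j))" by (meson not_le)
  with True show ?thesis unfolding stab_steps_def by simp
qed (simp add: stab_steps_def)

lemma stab_steps_le_temps_stab:
  "is_exec \<pi> d f \<Longrightarrow> stab_steps \<pi> d spec f \<le> temps_stab \<pi> d spec"
  unfolding temps_stab_def by (auto intro: SUP_upper)

lemma self_stabilizing_sync_exec_satisfies:
  assumes "self_stabilizing \<pi> ds spec"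
  obtains e where "is_exec \<pi> ds e" "spec e"
proof -
  obtain j where "legitimate \<pi> ds spec (guided_run \<pi> pref c j)"
    using assms guided_run_is_sync_exec unfolding self_stabilizing_def by fastforce
  moreover have "is_exec \<pi> ds (\<lambda>i. guided_run \<pi> pref c (j + i),
                               \<lambda>i. enabled \<pi> (guided_run \<pi> pref c (j + i)))"
    using suffix_is_exec[OF guided_run_is_sync_exec] by simp
  ultimately show thesis using that unfolding legitimate_def by fastforce
qed

theorem theorem3:
  fixes E :: "'v::finite \<Rightarrow> 'v \<Rightarrow> bool"
    and \<pi> :: "('v, 's) protocol"
    and priv :: "'v \<Rightarrow> 's \<Rightarrow> bool"
  assumes "undirected_connected E"
    and "is_protocol E \<pi>"
    and "self_stabilizing \<pi> ds (spec_EM priv)"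
  shows "enat (nat \<lceil>real (diam E) / 2\<rceil>) \<le> temps_stab \<pi> ds (spec_EM priv)"
proof (cases "(diam E + 1) div 2")
  case 0
  then show ?thesis by (simp add: nat_ceiling_half zero_enat_def[symmetric])
next
  case (Suc k)
  obtain u v where uv: "gdist E u v = diam E" by (rule diam_attained)
  have sym: "\<forall>a b. E a b \<longrightarrow> E b a" using assms(1) unfolding undirected_connected_def by blast
  have disj: "hop_ball E u k \<inter> hop_ball E v k = {}"
    using hop_balls_disjoint[OF sym] uv Suc by simp
  then have "u \<noteq> v" using center_in_hop_ball by fast
  obtain e where "is_exec \<pi> ds e" "spec_EM priv e"
    using self_stabilizing_sync_exec_satisfies[OF assms(3)] .
  then obtain f where f: "is_exec \<pi> ds f" "priv u (fst f k u)" "priv v (fst f k v)"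
    using sync_exec_with_two_privileged[OF assms(2) _ _ disj] by blast
  have "enat (Suc k) \<le> stab_steps \<pi> ds (spec_EM priv) f"
    using not_legitimate_before_exclusion_fault[OF f(1) \<open>u \<noteq> v\<close>, of priv k] f(2,3)
    by (simp add: stab_steps_lower_bound)
  also have "\<dots> \<le> temps_stab \<pi> ds (spec_EM priv)"
    using f(1) by (rule stab_steps_le_temps_stab)
  finally show ?thesis using Suc by (simp add: nat_ceiling_half)
qed

end
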